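(* Let $\sigma=(a_1,\ldots,a_s)$ be a partition of $r$ and let $H=H(n,r,q\mid\sigma)$ with $n\ge s$ and $q\ge r$. Suppose $d=\gcd(a_1,\ldots,a_s)\ge2$ and $q\equiv t\pmod d$ with $1\le t\le d-1$. Then every maximum matching of $H$ leaves at least $tn$ vertices unmatched. Hence $\nu(H)\le\frac{n(q-t)}{r}$.
   Context: A $\sigma$-hypergraph $H=H(n,r,q\mid\sigma)$, for a partition $\sigma=(a_1,\ldots,a_s)$ of $r$ with $s$ parts, is the $r$-uniform hypergraph whose vertex set is the disjoint union of $n$ classes $V_1,\ldots,V_n$, each of size $q$; an $r$-subset $K$ of vertices is an edge iff the multiset of non-zero values $|K\cap V_i|$ equals $\sigma$. A matching is a set of pairwise vertex-disjoint edges; $\nu(H)$ is the maximum size of a matching. *)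

theory Defs
  imports Complex_Main "HOL-Library.Multiset"
begin

definition sh_vertices :: "nat \<Rightarrow> nat \<Rightarrow> (nat \<times> nat) set" where
  "sh_vertices n q = {0..<n} \<times> {0..<q}"

definition sh_class :: "nat \<Rightarrow> nat \<Rightarrow> (nat \<times> nat) set" where
  "sh_class q i = {i} \<times> {0..<q}"

definition sh_edges :: "nat \<Rightarrow> nat \<Rightarrow> nat \<Rightarrow> nat multiset \<Rightarrow> (nat \<times> nat) set set" where
  "sh_edges n r q \<sigma> = {K. K \<subseteq> sh_vertices n q \<and> card K = r \<and>
      image_mset (\<lambda>i. card (K \<inter> sh_class q i))
        (mset_set {i \<in> {0..<n}. K \<inter> sh_class q i \<noteq> {}}) = \<sigma>}"

definition is_partition_of :: "nat multiset \<Rightarrow> nat \<Rightarrow> bool" where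
  "is_partition_of \<sigma> r \<longleftrightarrow> (\<forall>a \<in># \<sigma>. 0 < a) \<and> sum_mset \<sigma> = r"

definition is_matching :: "'a set set \<Rightarrow> 'a set set \<Rightarrow> bool" where
  "is_matching E M \<longleftrightarrow> M \<subseteq> E \<and> pairwise disjnt M"

definition matching_number :: "'a set set \<Rightarrow> nat" where
  "matching_number E = Max (card ` {M. is_matching E M})"

definition is_max_matching :: "'a set set \<Rightarrow> 'a set set \<Rightarrow> bool" where
  "is_max_matching E M \<longleftrightarrow> is_matching E M \<and> card M = matching_number E"

end

theory Submission
  imports Defs
begin

text \<open>Every edge meets each class in a part of \<sigma> or not at all, so a matching covers a
multiple of d vertices of each class. Since q \<equiv> t (mod d), at least t vertices of each of
the n classes stay uncovered; counting the covered vertices gives the bound on \<nu>(H).\<close>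

lemma finite_sh_vertices: "finite (sh_vertices n q)"
  by (simp add: sh_vertices_def)

lemma finite_sh_edges: "finite (sh_edges n r q \<sigma>)"
proof (rule finite_subset)
  show "sh_edges n r q \<sigma> \<subseteq> Pow (sh_vertices n q)"
    by (auto simp: sh_edges_def)
qed (simp add: finite_sh_vertices)

lemma card_sh_class: "card (sh_class q i) = q"
  by (simp add: sh_class_def)

lemma sh_vertices_eq_UN_sh_class: "sh_vertices n q = (\<Union>i\<in>{0..<n}. sh_class q i)"
  by (auto simp: sh_vertices_def sh_class_def)

lemma card_Int_sh_class_in_partition:
  assumes K: "K \<in> sh_edges n r q \<sigma>" and meets: "K \<inter> sh_class q i \<noteq> {}"
  shows "card (K \<inter> sh_class q i) \<in># \<sigma>"
proof -
  have "i < n"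
    using K meets by (auto simp: sh_edges_def sh_vertices_def sh_class_def)
  then have "card (K \<inter> sh_class q i) \<in># image_mset (\<lambda>i. card (K \<inter> sh_class q i))
               (mset_set {i \<in> {0..<n}. K \<inter> sh_class q i \<noteq> {}})"
    using meets by auto
  with K show ?thesis
    by (simp add: sh_edges_def)
qed

lemma Gcd_dvd_card_Int_sh_class:
  assumes "K \<in> sh_edges n r q \<sigma>"
  shows "Gcd (set_mset \<sigma>) dvd card (K \<inter> sh_class q i)"
  using card_Int_sh_class_in_partition[OF assms] by (cases "K \<inter> sh_class q i = {}") auto

lemma card_Union_Int_disjoint:
  assumes "finite M" "pairwise disjnt M" "\<And>K. K \<in> M \<Longrightarrow> finite K"
  shows "card (\<Union>M \<inter> C) = (\<Sum>K\<in>M. card (K \<inter> C))"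
proof -
  have "\<Union>M \<inter> C = (\<Union>K\<in>M. K \<inter> C)"
    by auto
  also have "card \<dots> = (\<Sum>K\<in>M. card (K \<inter> C))"
    using assms by (intro card_UN_disjoint) (auto simp: pairwise_def disjnt_def)
  finally show ?thesis .
qed

lemma mod_le_diff_of_dvd:
  fixes q m d :: nat
  assumes "m \<le> q" "d dvd m"
  shows "q mod d \<le> q - m"
proof -
  from \<open>d dvd m\<close> obtain k where "m = d * k" ..
  with \<open>m \<le> q\<close> have "q mod d = (q - m) mod d"
    by (metis le_add_diff_inverse2 mod_mult_self2)
  then show ?thesis
    by simp
qed

context
  fixes n r q :: nat and \<sigma> :: "nat multiset" and M :: "(nat \<times> nat) set set"
  assumes matching: "is_matching (sh_edges n r q \<sigma>) M"
begin

private lemma matching_facts: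
  "finite M" "pairwise disjnt M" "\<And>K. K \<in> M \<Longrightarrow> K \<subseteq> sh_vertices n q \<and> card K = r"
  "\<And>K. K \<in> M \<Longrightarrow> finite K"
proof -
  show "finite M" "pairwise disjnt M"
    using matching finite_sh_edges by (auto simp: is_matching_def intro: finite_subset)
  show edge: "K \<subseteq> sh_vertices n q \<and> card K = r" if "K \<in> M" for K
    using matching that by (auto simp: is_matching_def sh_edges_def)
  show "finite K" if "K \<in> M" for K
    using edge[OF that] finite_sh_vertices by (blast intro: finite_subset)
qed

lemma Gcd_dvd_card_covered_sh_class:
  "Gcd (set_mset \<sigma>) dvd card (\<Union>M \<inter> sh_class q i)"
proof -
  have "Gcd (set_mset \<sigma>) dvd (\<Sum>K\<in>M. card (K \<inter> sh_class q i))"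
    using matching Gcd_dvd_card_Int_sh_class by (auto simp: is_matching_def intro!: dvd_sum)
  then show ?thesis
    by (simp add: card_Union_Int_disjoint matching_facts)
qed

lemma card_uncovered_sh_class_ge:
  "q mod Gcd (set_mset \<sigma>) \<le> card (sh_class q i - \<Union>M)"
proof -
  have fin: "finite (sh_class q i)"
    by (simp add: sh_class_def)
  have "card (sh_class q i - \<Union>M) = q - card (\<Union>M \<inter> sh_class q i)"
    using fin by (simp add: card_Diff_subset_Int card_sh_class Int_commute)
  moreover have "card (\<Union>M \<inter> sh_class q i) \<le> q"
    using fin by (metis card_sh_class card_mono inf.cobounded2)
  ultimately show ?thesis
    using mod_le_diff_of_dvd Gcd_dvd_card_covered_sh_class by presburger
qed

lemma card_uncovered_ge:
  "n * (q mod Gcd (set_mset \<sigma>)) \<le> card (sh_vertices n q - \<Union>M)"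
proof -
  have "sh_vertices n q - \<Union>M = (\<Union>i\<in>{0..<n}. sh_class q i - \<Union>M)"
    by (auto simp: sh_vertices_eq_UN_sh_class)
  also have "card \<dots> = (\<Sum>i\<in>{0..<n}. card (sh_class q i - \<Union>M))"
    by (intro card_UN_disjoint) (auto simp: sh_class_def)
  finally have "card (sh_vertices n q - \<Union>M) = (\<Sum>i\<in>{0..<n}. card (sh_class q i - \<Union>M))" .
  moreover have "(\<Sum>i\<in>{0..<n}. q mod Gcd (set_mset \<sigma>)) \<le> \<dots>"
    by (intro sum_mono card_uncovered_sh_class_ge)
  ultimately show ?thesis
    by simp
qed

lemma card_covered: "card (\<Union>M) = card M * r"
  using card_Union_Int_disjoint[of M UNIV] matching_facts by simp

lemma card_matching_bound:
  "card M * r + n * (q mod Gcd (set_mset \<sigma>)) \<le> n * q"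
proof -
  have "\<Union>M \<subseteq> sh_vertices n q"
    using matching_facts by blast
  then have "card (sh_vertices n q - \<Union>M) + card (\<Union>M) = card (sh_vertices n q)"
    by (metis card_Diff_subset card_mono finite_sh_vertices finite_subset le_add_diff_inverse2)
  moreover have "card (sh_vertices n q) = n * q"
    by (simp add: sh_vertices_def)
  ultimately show ?thesis
    using card_uncovered_ge card_covered by linarith
qed

end

lemma matching_number_attained:
  assumes "finite E"
  obtains M where "is_matching E M" "card M = matching_number E"
proof -
  have "finite {M. is_matching E M}"
    using assms by (auto simp: is_matching_def intro: finite_subset[of _ "Pow E"])
  moreover have "is_matching E {}"
    by (simp add: is_matching_def)
  ultimately have "matching_number E \<in> card ` {M. is_matching E M}"
    unfolding matching_number_def by (intro Max_in) auto
  then show ?thesis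
    using that by auto
qed

theorem lemma3p4:
  fixes n r q t d :: nat and \<sigma> :: "nat multiset"
  assumes "is_partition_of \<sigma> r"
    and "n \<ge> size \<sigma>" and "q \<ge> r"
    and "d = Gcd (set_mset \<sigma>)" and "d \<ge> 2"
    and "q mod d = t mod d" and "1 \<le> t" and "t \<le> d - 1"
  shows "(\<forall>M. is_max_matching (sh_edges n r q \<sigma>) M \<longrightarrow>
            card (sh_vertices n q - \<Union>M) \<ge> t * n)
       \<and> real (matching_number (sh_edges n r q \<sigma>)) \<le> real n * (real q - real t) / real r"
proof -
  have qt: "q mod Gcd (set_mset \<sigma>) = t"
    using assms(4-8) by simp
  have "\<sigma> \<noteq> {#}"
    using assms(4,5) by auto
  then obtain a \<sigma>' where "\<sigma> = add_mset a \<sigma>'"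
    by (metis multiset_cases)
  then have r_pos: "0 < r"
    using assms(1) by (auto simp: is_partition_of_def)
  obtain M where M: "is_matching (sh_edges n r q \<sigma>) M"
    and M_max: "card M = matching_number (sh_edges n r q \<sigma>)"
    by (rule matching_number_attained[OF finite_sh_edges])
  have "card M * r + n * t \<le> n * q"
    using card_matching_bound[OF M] by (simp add: qt)
  then have "real (card M) * real r + real n * real t \<le> real n * real q"
    by (metis of_nat_add of_nat_le_iff of_nat_mult)
  then have "real (card M) * real r \<le> real n * (real q - real t)"
    by (simp add: right_diff_distrib)
  then have "real (matching_number (sh_edges n r q \<sigma>)) \<le> real n * (real q - real t) / real r"
    using r_pos M_max by (simp add: pos_le_divide_eq)
  moreover have "t * n \<le> card (sh_vertices n q - \<Union>M')"
    if "is_max_matching (sh_edges n r q \<sigma>) M'" for M'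
    using card_uncovered_ge[of n r q \<sigma> M'] that qt by (simp add: is_max_matching_def mult.commute)
  ultimately show ?thesis
    by blast
qed

end
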